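(* Let $R$ be an associative ring with identity and involution $*$, and let $a\in R^{\#}\cap R^{\dagger}$. Then $a\in R^{SEP}$ if and only if $a^2a^*a^{\#}\in PE(R)$.
   Context: An involution on $R$ is a map $x\mapsto x^*$ with $(x^* )^*=x$, $(x+y)^*=x^*+y^*$, $(xy)^*=y^*x^*$. An element $a$ is Moore–Penrose invertible if there is $b$ with $aba=a$, $bab=b$, $(ab)^*=ab$, $(ba)^*=ba$; such $b$ is unique, denoted $a^{\dagger}$, and $R^{\dagger}$ is the set of such $a$. An element $a$ is group invertible if there is $b$ with $aba=a$, $bab=b$, $ab=ba$; such $b$ is unique, denoted $a^{\#}$, and $R^{\#}$ is the set of such $a$. $PE(R)=\{e\in R: e^2=e=e^*\}$ is the set of projections. For $a\in R^{\#}\cap R^{\dagger}$, $a$ is SEP if $a^*=a^{\dagger}=a^{\#}$; $R^{SEP}$ denotes the set of SEP elements. *)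

theory Defs
  imports Main
begin

definition involution :: "('a::ring_1 \<Rightarrow> 'a) \<Rightarrow> bool" where
  "involution s \<longleftrightarrow> (\<forall>x. s (s x) = x) \<and> (\<forall>x y. s (x + y) = s x + s y)
      \<and> (\<forall>x y. s (x * y) = s y * s x)"

definition is_mp_inverse :: "('a::ring_1 \<Rightarrow> 'a) \<Rightarrow> 'a \<Rightarrow> 'a \<Rightarrow> bool" where
  "is_mp_inverse s a b \<longleftrightarrow> a * b * a = a \<and> b * a * b = b \<and> s (a * b) = a * b \<and> s (b * a) = b * a"

definition mp_invertible :: "('a::ring_1 \<Rightarrow> 'a) \<Rightarrow> 'a \<Rightarrow> bool" where
  "mp_invertible s a \<longleftrightarrow> (\<exists>b. is_mp_inverse s a b)"

definition mp_inv :: "('a::ring_1 \<Rightarrow> 'a) \<Rightarrow> 'a \<Rightarrow> 'a" where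
  "mp_inv s a = (THE b. is_mp_inverse s a b)"

definition is_group_inverse :: "'a::ring_1 \<Rightarrow> 'a \<Rightarrow> bool" where
  "is_group_inverse a b \<longleftrightarrow> a * b * a = a \<and> b * a * b = b \<and> a * b = b * a"

definition group_invertible :: "'a::ring_1 \<Rightarrow> bool" where
  "group_invertible a \<longleftrightarrow> (\<exists>b. is_group_inverse a b)"

definition group_inv :: "'a::ring_1 \<Rightarrow> 'a" where
  "group_inv a = (THE b. is_group_inverse a b)"

definition projection :: "('a::ring_1 \<Rightarrow> 'a) \<Rightarrow> 'a \<Rightarrow> bool" where
  "projection s e \<longleftrightarrow> e * e = e \<and> e = s e"

definition SEP :: "('a::ring_1 \<Rightarrow> 'a) \<Rightarrow> 'a \<Rightarrow> bool" where
  "SEP s a \<longleftrightarrow> group_invertible a \<and> mp_invertible s a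
      \<and> s a = mp_inv s a \<and> mp_inv s a = group_inv a"

end

theory Submission
  imports Defs
begin

(* Let p = a a# and c = a a* a#, so that a^2 a* a# = a c. Idempotence of a c gives c a c = c.
   In the corner ring pRp, where a is a unit with inverse a#, the element c a = a a* p is
   idempotent and has the right inverse (a\<dagger>)* a\<dagger> p, hence c a = p; so c = a# and
   a^2 a* a# = p. Self-adjointness of p makes a# the Moore-Penrose inverse of a, and then
   a* = (a# a) a* (a a#) = a# c a = a#. *)

lemma involution_mult: "involution s \<Longrightarrow> s (x * y) = s y * s x"
  by (simp add: involution_def)

lemma is_group_inverse_unique:
  fixes a b c :: "'a::ring_1"
  assumes "is_group_inverse a b" and "is_group_inverse a c"
  shows "b = c"
proof -
  have b: "a * b * a = a" "b * a * b = b" "a * b = b * a"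
    and c: "a * c * a = a" "c * a * c = c" "a * c = c * a"
    using assms by (auto simp: is_group_inverse_def)
  have aab: "a * a * b = a"
    using b by (metis mult.assoc)
  have "a * b = c * a"
    using c aab by (metis mult.assoc)
  then have ab_ac: "a * b = a * c"
    using c by simp
  have "b = b * a * c"
    using b ab_ac by (metis mult.assoc)
  also have "\<dots> = c"
    using b c ab_ac by (metis mult.assoc)
  finally show ?thesis .
qed

lemma group_inv_eqI: "is_group_inverse a b \<Longrightarrow> group_inv a = b"
  unfolding group_inv_def using is_group_inverse_unique by blast

lemma is_mp_inverse_adjoint_absorb:
  assumes s: "involution s" and b: "is_mp_inverse s a b"
  shows "s a * (a * b) = s a" and "b * a * s a = s a" and "a * b * s b = s b"
proof -
  have abs: "a * b * a = a" "b * a * b = b" "s (a * b) = a * b" "s (b * a) = b * a"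
    using b by (auto simp: is_mp_inverse_def)
  have "s a = s (a * b * a)" using abs by simp
  also have "\<dots> = s a * s (a * b)" by (rule involution_mult[OF s])
  finally show "s a * (a * b) = s a" using abs by simp
  have "s a = s (b * a) * s a"
    using abs involution_mult[OF s, of a "b * a"] by (simp add: mult.assoc)
  then show "b * a * s a = s a" using abs by simp
  have "s b = s b * s a * s b"
    using abs involution_mult[OF s] by (metis mult.assoc)
  also have "\<dots> = a * b * s b"
    using abs involution_mult[OF s] by metis
  finally show "a * b * s b = s b" by simp
qed

lemma is_mp_inverse_unique:
  assumes s: "involution s" and "is_mp_inverse s a b" and "is_mp_inverse s a c"
  shows "b = c"
proof -
  have b: "a * b * a = a" "b * a * b = b" "s (a * b) = a * b" "s (b * a) = b * a"
    and c: "a * c * a = a" "c * a * c = c" "s (a * c) = a * c" "s (c * a) = c * a"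
    using assms by (auto simp: is_mp_inverse_def)
  note absorb_c = is_mp_inverse_adjoint_absorb[OF s assms(3)]
  have "a * b = s b * s a"
    using b by (simp add: involution_mult[OF s])
  also have "\<dots> = s b * s a * (a * c)"
    using absorb_c(1) by (simp add: mult.assoc)
  also have "\<dots> = a * c"
    using b involution_mult[OF s] by (metis mult.assoc)
  finally have ab_ac: "a * b = a * c" .
  have "b * a = s a * s b"
    using b by (simp add: involution_mult[OF s])
  also have "\<dots> = c * a * (s a * s b)"
    using absorb_c(2) by (metis mult.assoc)
  also have "\<dots> = c * a"
    using b c by (simp add: involution_mult[OF s, symmetric] mult.assoc)
  finally have ba_ca: "b * a = c * a" .
  show ?thesis
    using b(2) c(2) ab_ac ba_ca by (metis mult.assoc)
qed

lemma mp_inv_eqI: "involution s \<Longrightarrow> is_mp_inverse s a b \<Longrightarrow> mp_inv s a = b"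
  unfolding mp_inv_def using is_mp_inverse_unique by blast

lemma group_inverse_is_mp_inverse:
  assumes "is_group_inverse a g" and "s (a * g) = a * g"
  shows "is_mp_inverse s a g"
  using assms unfolding is_group_inverse_def is_mp_inverse_def by metis

lemma idempotent_imp_mult_adjoint_group_inverse_eq:
  assumes s: "involution s" and g: "is_group_inverse a g" and m: "is_mp_inverse s a m"
    and idem: "a * a * s a * g * (a * a * s a * g) = a * a * s a * g"
  shows "a * s a * g = g"
proof -
  define p where "p = a * g"
  define c where "c = a * s a * g"
  have aga: "a * g * a = a" and gag: "g * a * g = g" and comm: "g * a = a * g"
    using g by (auto simp: is_group_inverse_def)
  have ap: "a * p = a"
    using aga by (metis p_def comm mult.assoc)
  have pg: "p * g = g"
    using gag by (simp add: p_def comm flip: mult.assoc)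
  have gaa: "g * (a * (a * z)) = a * z" for z
    using aga comm by (metis mult.assoc)
  have "c * a * c = g * a * a * s a * g * (a * a * s a * g)"
    by (simp add: c_def gaa mult.assoc)
  also have "\<dots> = g * a * a * s a * g"
    using idem by (simp add: mult.assoc)
  also have "\<dots> = c"
    using aga by (simp add: c_def comm flip: mult.assoc)
  finally have cac: "c * a * c = c" .
  have psm: "p * s m = s m"
    using is_mp_inverse_adjoint_absorb(3)[OF s m] aga by (metis p_def mult.assoc)
  have "c * a * (s m * m * p) = a * s a * (p * s m) * m * p"
    by (simp add: c_def p_def comm mult.assoc)
  also have "\<dots> = a * s (m * a) * m * p"
    by (simp add: psm involution_mult[OF s] mult.assoc)
  also have "\<dots> = p"
    using m by (simp add: is_mp_inverse_def p_def flip: mult.assoc)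
  finally have right_inv: "c * a * (s m * m * p) = p" .
  have "c * a = c * a * p"
    using ap by (simp add: mult.assoc)
  also have "\<dots> = c * a * (c * a * (s m * m * p))"
    by (simp only: right_inv)
  also have "\<dots> = c * a * c * a * (s m * m * p)"
    by (simp only: mult.assoc)
  also have "\<dots> = p"
    using cac right_inv by simp
  finally have "c * a = p" .
  moreover have "c = c * a * g"
    using gag by (simp add: c_def mult.assoc)
  ultimately have "c = p * g"
    by simp
  then show ?thesis
    using pg c_def by simp
qed

lemma group_mp_inverse_adjoint_eq:
  assumes s: "involution s" and g: "is_group_inverse a g" and "is_mp_inverse s a g"
    and "a * s a * g = g"
  shows "s a = g"
proof -
  have comm: "a * g = g * a"
    using g by (simp add: is_group_inverse_def)
  note absorb = is_mp_inverse_adjoint_absorb[OF s assms(3)]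
  have "s a = g * a * s a * (a * g)"
    using absorb(1,2) by (simp add: mult.assoc)
  also have "\<dots> = g * (a * s a * g) * a"
    using comm by (simp add: mult.assoc)
  also have "\<dots> = g"
    using assms(4) g comm unfolding is_group_inverse_def by (metis mult.assoc)
  finally show ?thesis .
qed

theorem corollary2p7:
  fixes s :: "'a::ring_1 \<Rightarrow> 'a" and a :: 'a
  assumes "involution s"
    and "group_invertible a" and "mp_invertible s a"
  shows "SEP s a \<longleftrightarrow> projection s (a ^ 2 * s a * group_inv a)"
proof -
  obtain g where g: "is_group_inverse a g"
    using assms(2) group_invertible_def by blast
  obtain m where m: "is_mp_inverse s a m"
    using assms(3) mp_invertible_def by blast
  define e where "e = a * a * s a * g"
  have sep_iff: "SEP s a \<longleftrightarrow> s a = g \<and> m = g"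
    using assms group_inv_eqI[OF g] mp_inv_eqI[OF assms(1) m] by (auto simp: SEP_def)
  have "SEP s a \<longleftrightarrow> projection s e"
  proof
    assume "SEP s a"
    then have "s a = g" and "m = g"
      using sep_iff by auto
    have "e = a * g"
      using g \<open>s a = g\<close> unfolding is_group_inverse_def e_def by (metis mult.assoc)
    moreover have "s (a * g) = a * g"
      using m \<open>m = g\<close> by (simp add: is_mp_inverse_def)
    moreover have "a * g * (a * g) = a * g"
      using g by (simp add: is_group_inverse_def flip: mult.assoc)
    ultimately show "projection s e"
      by (simp add: projection_def)
  next
    assume "projection s e"
    then have "e * e = e" and "s e = e"
      by (simp_all add: projection_def)
    have "a * s a * g = g"
      using idempotent_imp_mult_adjoint_group_inverse_eq[OF assms(1) g m] \<open>e * e = e\<close> by (simp add: e_def)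
    then have "e = a * g"
      by (simp add: e_def mult.assoc)
    then have "is_mp_inverse s a g"
      using g \<open>s e = e\<close> by (simp add: group_inverse_is_mp_inverse)
    then show "SEP s a"
      using sep_iff is_mp_inverse_unique[OF assms(1) m] group_mp_inverse_adjoint_eq[OF assms(1) g]
        \<open>a * s a * g = g\<close> by blast
  qed
  then show ?thesis
    by (simp add: e_def group_inv_eqI[OF g] power2_eq_square)
qed

end
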